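(* Let $d\ge1$, $\alpha\in\mathbb{N}$, let $H=(V,E)$ be a $d$-hypergraph with no isolated vertex and let $w\colon E\to\mathbb{Z}$ satisfy $w(e)\ne0$ for all $e\in E$. Define $g(0)=1$ and $g(i)=\big(i^{i}\cdot 2\alpha\cdot 2^{2^d}\big)^{2^i-1}$ for $i>0$. Suppose there is a set $c$ with $c\subseteq e$ for some $e\in E$ such that (i) $|\mathrm{link}(c)|\ge g(d-|c|)$, and (ii) for every set $f$ with $c\subsetneq f\subseteq V$ and $|f|\le d$ we have $|\mathrm{link}(f)|<g(d-|f|)$. Then there is a set $X\subseteq V$ with $|w[X]|\ge\alpha$.
   Context: A $d$-hypergraph $H=(V,E)$ has a vertex set $V$ and a set $E$ of edges, each $e\subseteq V$ with $|e|\le d$ (the empty set may be an edge). A vertex is isolated if it lies in no edge. For $c\subseteq V$, $\mathrm{link}(c)=\{e\in E: c\subsetneq e\}$. For $X\subseteq V$, $E[X]=\{e\in E: e\subseteq X\}$ and $w[X]=\sum_{e\in E[X]}w(e)$. *)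

theory Defs
  imports Main
begin

definition hypergraph :: "nat \<Rightarrow> 'a set \<Rightarrow> 'a set set \<Rightarrow> bool" where
  "hypergraph d V E \<longleftrightarrow> finite V \<and> (\<forall>e\<in>E. e \<subseteq> V \<and> card e \<le> d)"

definition no_isolated :: "'a set \<Rightarrow> 'a set set \<Rightarrow> bool" where
  "no_isolated V E \<longleftrightarrow> (\<forall>v\<in>V. \<exists>e\<in>E. v \<in> e)"

definition link :: "'a set set \<Rightarrow> 'a set \<Rightarrow> 'a set set" where
  "link E c = {e \<in> E. c \<subset> e}"

definition induced_edges :: "'a set set \<Rightarrow> 'a set \<Rightarrow> 'a set set" where
  "induced_edges E X = {e \<in> E. e \<subseteq> X}"

definition weight :: "'a set set \<Rightarrow> ('a set \<Rightarrow> int) \<Rightarrow> 'a set \<Rightarrow> int" where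
  "weight E w X = (\<Sum>e\<in>induced_edges E X. w e)"

definition gfun :: "nat \<Rightarrow> nat \<Rightarrow> nat \<Rightarrow> nat" where
  "gfun d \<alpha> i = (if i = 0 then 1 else (i ^ i * (2 * \<alpha>) * 2 ^ (2 ^ d)) ^ (2 ^ i - 1))"

end

theory Submission
  imports Defs Complex_Main "HOL-Library.FuncSet" "HOL-Library.Disjoint_Sets"
begin

text \<open>
  Suppose every \<open>X \<subseteq> V\<close> has \<open>|w[X]| < \<alpha>\<close>. By (ii), a vertex \<open>v \<notin> c\<close> lies in the petal \<open>e - c\<close> of at
  most \<open>g(d - |c| - 1)\<close> edges \<open>e\<close> of \<open>link(c)\<close> (all but one of them lie in \<open>link(c \<union> {v})\<close>), so a greedy
  choice among the at least \<open>g(d - |c|)\<close> edges of \<open>link(c)\<close> yields \<open>2\<alpha> 2^(2^d)\<close> edges with pairwise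
  disjoint petals. Each of them contains a minimal edge not inside \<open>c\<close>, which gives \<open>A \<subseteq> c\<close> and
  \<open>B \<subseteq> e - c\<close> with \<open>w[A \<union> B] \<noteq> w[A]\<close>; by pigeonhole, \<open>m \<ge> 2\<alpha> 2^(2^d - d)\<close> of the edges share \<open>A\<close> and
  the sign of this jump, so their jumps \<open>w[A \<union> B\<^sub>i] - w[A]\<close> sum to at least \<open>m\<close>.

  On the other hand, distribute the blocks \<open>B\<^sub>i\<close> in all \<open>d^m\<close> ways among \<open>d\<close> classes and let \<open>Z(j)\<close> be the
  total weight of \<open>A\<close> together with the blocks of class \<open>< j\<close>. An edge meeting \<open>t \<le> d\<close> blocks contributes
  \<open>j^t d^(m-t)\<close> times its weight, so \<open>Z\<close> is a polynomial of degree \<open>\<le> d\<close> whose linear coefficient is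
  \<open>d^(m-1)\<close> times the sum of the jumps. Reading this coefficient off \<open>Z(0), \<dots>, Z(d)\<close>, each of modulus
  at most \<open>d^m (\<alpha> - 1)\<close>, bounds the sum of the jumps by \<open>2^(2^d - d + 1) (\<alpha> - 1) < m\<close>.
\<close>

section \<open>Reading off the linear coefficient of a polynomial\<close>

text \<open>\<open>alt_binomial_sum d q\<close> is \<open>(-1)^d\<close> times the \<open>d\<close>-th forward difference of \<open>q\<close> at \<open>0\<close>.\<close>

definition alt_binomial_sum :: "nat \<Rightarrow> (nat \<Rightarrow> real) \<Rightarrow> real" where
  "alt_binomial_sum d q = (\<Sum>j\<le>d. (-1) ^ j * real (d choose j) * q j)"

lemma alt_binomial_sum_Suc:
  "alt_binomial_sum (Suc d) q = alt_binomial_sum d q - alt_binomial_sum d (\<lambda>j. q (Suc j))"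
proof -
  have "alt_binomial_sum (Suc d) q = (\<Sum>j\<le>Suc d. (-1) ^ j * real (d choose j) * q j)
        + (\<Sum>j\<le>Suc d. (-1) ^ j * real (if j = 0 then 0 else d choose (j - 1)) * q j)"
    unfolding alt_binomial_sum_def
    by (subst sum.distrib[symmetric], rule sum.cong) (auto simp: algebra_simps choose_reduce_nat)
  also have "(\<Sum>j\<le>Suc d. (-1) ^ j * real (d choose j) * q j) = alt_binomial_sum d q"
    unfolding alt_binomial_sum_def by simp
  also have "(\<Sum>j\<le>Suc d. (-1) ^ j * real (if j = 0 then 0 else d choose (j - 1)) * q j)
       = - alt_binomial_sum d (\<lambda>j. q (Suc j))"
    unfolding alt_binomial_sum_def by (subst sum.atMost_Suc_shift) (simp add: sum_negf[symmetric])
  finally show ?thesis by simp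
qed

lemma alt_binomial_sum_linear:
  "alt_binomial_sum d (\<lambda>j. a * f j + b * g j) = a * alt_binomial_sum d f + b * alt_binomial_sum d g"
  unfolding alt_binomial_sum_def by (simp add: sum.distrib sum_distrib_left algebra_simps)

lemma alt_binomial_sum_sum:
  "finite R \<Longrightarrow> alt_binomial_sum d (\<lambda>j. \<Sum>r\<in>R. h r j) = (\<Sum>r\<in>R. alt_binomial_sum d (h r))"
  unfolding alt_binomial_sum_def by (simp add: sum_distrib_left sum.swap[of _ R] algebra_simps)

lemma alt_binomial_sum_power_eq_0:
  "s < d \<Longrightarrow> alt_binomial_sum d (\<lambda>j. real j ^ s) = 0"
proof (induction d arbitrary: s)
  case 0
  then show ?case by simp
next
  case (Suc d)
  have lower_zero: "alt_binomial_sum d (\<lambda>j. real (s choose r) * real j ^ r) = 0" if "r < s" for r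
    using Suc.IH[of r] Suc.prems that alt_binomial_sum_linear[of d "real (s choose r)" "\<lambda>j. real j ^ r" 0]
    by simp
  have "(\<lambda>j. real (Suc j) ^ s) = (\<lambda>j. real j ^ s + (\<Sum>r<s. real (s choose r) * real j ^ r))"
  proof
    fix j
    have "real (Suc j) ^ s = (\<Sum>r\<le>s. real (s choose r) * real j ^ r)"
      by (subst of_nat_Suc, subst add.commute, subst binomial_ring) (simp add: mult.commute)
    then show "real (Suc j) ^ s = real j ^ s + (\<Sum>r<s. real (s choose r) * real j ^ r)"
      by (simp add: lessThan_Suc_atMost[symmetric])
  qed
  then have "alt_binomial_sum d (\<lambda>j. real (Suc j) ^ s) = alt_binomial_sum d (\<lambda>j. real j ^ s)"
    using alt_binomial_sum_linear[of d 1 "\<lambda>j. real j ^ s" 1 "\<lambda>j. \<Sum>r<s. real (s choose r) * real j ^ r"]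
    by (simp add: alt_binomial_sum_sum lower_zero)
  then show ?case by (simp add: alt_binomial_sum_Suc)
qed

definition linear_coeff_weight :: "nat \<Rightarrow> nat \<Rightarrow> real" where
  "linear_coeff_weight d j =
     (if j = 0 then - (\<Sum>i\<in>{1..d}. (-1) ^ (i - 1) * real (d choose i) / real i)
      else (-1) ^ (j - 1) * real (d choose j) / real j)"

lemma sum_atMost_split_zero: "(\<Sum>j\<le>(d::nat). f j) = f 0 + (\<Sum>j\<in>{1..d}. f j)"
proof -
  have "{..d} = insert 0 {1..d}" by auto
  then show ?thesis by simp
qed

lemma sum_linear_coeff_weight_power:
  assumes "d \<ge> 1" "t \<le> d"
  shows "(\<Sum>j\<le>d. linear_coeff_weight d j * real j ^ t) = (if t = 1 then 1 else 0)"
proof (cases t)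
  case 0
  then show ?thesis by (subst sum_atMost_split_zero) (simp add: linear_coeff_weight_def)
next
  case (Suc s)
  have "(\<Sum>j\<le>d. linear_coeff_weight d j * real j ^ t)
      = (\<Sum>j\<in>{1..d}. - ((-1) ^ j * real (d choose j) * real j ^ s))"
  proof (subst sum_atMost_split_zero, rule trans[OF _ sum.cong[OF refl]])
    fix j assume "j \<in> {1..d}"
    then obtain i where "j = Suc i" by (cases j) auto
    then show "linear_coeff_weight d j * real j ^ t = - ((-1) ^ j * real (d choose j) * real j ^ s)"
      by (simp add: linear_coeff_weight_def Suc field_simps)
  qed (simp add: Suc)
  also have "\<dots> = (if s = 0 then 1 else 0) - alt_binomial_sum d (\<lambda>j. real j ^ s)"
    unfolding alt_binomial_sum_def sum_atMost_split_zero[of _ d] by (simp add: sum_negf)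
  also have "alt_binomial_sum d (\<lambda>j. real j ^ s) = 0"
    using assms Suc by (intro alt_binomial_sum_power_eq_0) simp
  finally show ?thesis using Suc by simp
qed

lemma sum_abs_linear_coeff_weight_le:
  "(\<Sum>j\<le>d. \<bar>linear_coeff_weight d j\<bar>) \<le> 2 * (2 ^ d - 1)"
proof -
  have "\<bar>linear_coeff_weight d j\<bar> \<le> real (d choose j)" if "j \<in> {1..d}" for j
    using that by (simp add: linear_coeff_weight_def abs_mult divide_le_eq)
  then have "(\<Sum>j\<in>{1..d}. \<bar>linear_coeff_weight d j\<bar>) \<le> (\<Sum>j\<in>{1..d}. real (d choose j))"
    by (rule sum_mono)
  also have "\<dots> = 2 ^ d - 1"
  proof -
    have "1 + (\<Sum>j\<in>{1..d}. d choose j) = 2 ^ d"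
      using choose_row_sum[of d] sum_atMost_split_zero[of "\<lambda>j. d choose j" d] by simp
    then have "1 + (\<Sum>j\<in>{1..d}. real (d choose j)) = 2 ^ d"
      by (metis of_nat_1 of_nat_add of_nat_numeral of_nat_power of_nat_sum)
    then show ?thesis by simp
  qed
  finally have pos: "(\<Sum>j\<in>{1..d}. \<bar>linear_coeff_weight d j\<bar>) \<le> 2 ^ d - 1" .
  have "\<bar>linear_coeff_weight d 0\<bar> = \<bar>\<Sum>j\<in>{1..d}. linear_coeff_weight d j\<bar>"
    by (simp add: linear_coeff_weight_def)
  also have "\<dots> \<le> (\<Sum>j\<in>{1..d}. \<bar>linear_coeff_weight d j\<bar>)" by (rule sum_abs)
  finally show ?thesis using pos by (subst sum_atMost_split_zero) simp
qed

lemma linear_coeff_weight_bound: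
  assumes "d \<ge> 1"
  shows "real d * (\<Sum>j\<le>d. \<bar>linear_coeff_weight d j\<bar>) * 2 ^ d \<le> 2 * 2 ^ 2 ^ d"
proof -
  consider "d = 1" | "d = 2" | "d = 3" | "d \<ge> 4" using assms by linarith
  then show ?thesis
  proof cases
    case 1
    then show ?thesis using sum_abs_linear_coeff_weight_le[of 1] by simp
  next
    case 2
    \<comment> \<open>the general estimate is too weak here; the exact value is 4\<close>
    have "(\<Sum>j\<le>2. \<bar>linear_coeff_weight 2 j\<bar>) = 4"
      by (simp add: linear_coeff_weight_def numeral_2_eq_2 atMost_Suc)
    then show ?thesis using 2 by simp
  next
    case 3
    then show ?thesis using sum_abs_linear_coeff_weight_le[of 3] by simp
  next
    case 4
    have "3 * d \<le> 2 ^ d" using 4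
    proof (induction d rule: dec_induct)
      case (step n)
      then show ?case by simp
    qed simp
    have "real d * (\<Sum>j\<le>d. \<bar>linear_coeff_weight d j\<bar>) * 2 ^ d \<le> 2 ^ d * (2 * 2 ^ d) * 2 ^ d"
      using sum_abs_linear_coeff_weight_le[of d] less_imp_le[OF of_nat_less_two_power[of d]]
      by (intro mult_right_mono mult_mono) auto
    also have "\<dots> = 2 * (2::real) ^ (3 * d)"
      by (simp add: numeral_3_eq_3 power_add)
    also have "\<dots> \<le> 2 * 2 ^ 2 ^ d"
      using \<open>3 * d \<le> 2 ^ d\<close> by (simp add: power_increasing)
    finally show ?thesis .
  qed
qed

section \<open>Weights of unions of disjoint blocks\<close>

lemma weight_eq_sum_if:
  "finite E \<Longrightarrow> weight E w X = (\<Sum>e\<in>E. if e \<subseteq> X then w e else 0)"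
  unfolding weight_def induced_edges_def by (simp add: sum.inter_filter)

definition blocks_meeting :: "'i set \<Rightarrow> ('i \<Rightarrow> 'a set) \<Rightarrow> 'a set \<Rightarrow> 'i set" where
  "blocks_meeting I B e = {i \<in> I. e \<inter> B i \<noteq> {}}"

lemma card_blocks_meeting_le:
  assumes "finite e" "finite I" "disjoint_family_on B I"
  shows "card (blocks_meeting I B e) \<le> card e"
proof -
  let ?T = "blocks_meeting I B e"
  have "card ?T = (\<Sum>i\<in>?T. 1)" by simp
  also have "\<dots> \<le> (\<Sum>i\<in>?T. card (e \<inter> B i))"
    using assms(1) by (intro sum_mono) (auto simp: blocks_meeting_def Suc_le_eq card_gt_0_iff)
  also have "\<dots> = card (\<Union>i\<in>?T. e \<inter> B i)"
    using assms by (intro card_UN_disjoint[symmetric])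
      (auto simp: blocks_meeting_def disjoint_family_on_def)
  also have "\<dots> \<le> card e"
    using assms(1) by (intro card_mono) auto
  finally show ?thesis .
qed

lemma card_PiE_less_on:
  assumes "finite I" "T \<subseteq> I" "j \<le> d"
  shows "card {\<phi> \<in> PiE I (\<lambda>_. {..<d}). \<forall>i\<in>T. \<phi> i < j} = j ^ card T * d ^ (card I - card T)"
proof -
  have "{\<phi> \<in> PiE I (\<lambda>_. {..<d}). \<forall>i\<in>T. \<phi> i < j} = PiE I (\<lambda>i. if i \<in> T then {..<j} else {..<d})"
  proof (intro set_eqI iffI)
    fix \<phi> assume "\<phi> \<in> {\<phi> \<in> PiE I (\<lambda>_. {..<d}). \<forall>i\<in>T. \<phi> i < j}"
    then show "\<phi> \<in> PiE I (\<lambda>i. if i \<in> T then {..<j} else {..<d})" by (auto simp: PiE_iff)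
  next
    fix \<phi> assume "\<phi> \<in> PiE I (\<lambda>i. if i \<in> T then {..<j} else {..<d})"
    then show "\<phi> \<in> {\<phi> \<in> PiE I (\<lambda>_. {..<d}). \<forall>i\<in>T. \<phi> i < j}"
      using assms by (auto simp: PiE_iff split: if_splits)
  qed
  then have "card {\<phi> \<in> PiE I (\<lambda>_. {..<d}). \<forall>i\<in>T. \<phi> i < j} = (\<Prod>i\<in>I. if i \<in> T then j else d)"
    using assms by (simp add: card_PiE if_distrib cong: if_cong)
  also have "\<dots> = j ^ card T * d ^ (card I - card T)"
    using assms by (simp add: prod.If_cases Int_absorb1 Diff_eq[symmetric] card_Diff_subset finite_subset)
  finally show ?thesis .
qed

lemma subset_union_blocks_iff:
  assumes "\<forall>i\<in>I. A \<inter> B i = {}" "disjoint_family_on B I" "J \<subseteq> I"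
  shows "e \<subseteq> A \<union> \<Union>(B ` J) \<longleftrightarrow> e \<subseteq> A \<union> \<Union>(B ` I) \<and> blocks_meeting I B e \<subseteq> J"
proof
  assume e: "e \<subseteq> A \<union> \<Union>(B ` J)"
  have "i \<in> J" if "i \<in> blocks_meeting I B e" for i
  proof -
    from that obtain x where x: "x \<in> e" "x \<in> B i" "i \<in> I"
      unfolding blocks_meeting_def by auto
    with assms(1) e obtain i' where "i' \<in> J" "x \<in> B i'" by blast
    with x assms(2,3) show ?thesis
      unfolding disjoint_family_on_def by (metis IntI empty_iff subsetD)
  qed
  with e assms(3) show "e \<subseteq> A \<union> \<Union>(B ` I) \<and> blocks_meeting I B e \<subseteq> J" by auto
next
  assume "e \<subseteq> A \<union> \<Union>(B ` I) \<and> blocks_meeting I B e \<subseteq> J"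
  then show "e \<subseteq> A \<union> \<Union>(B ` J)" by (auto simp: blocks_meeting_def)
qed

lemma sum_weight_over_assignments:
  assumes "finite E" "finite I" "\<forall>i\<in>I. A \<inter> B i = {}" "disjoint_family_on B I" "j \<le> d"
  shows "(\<Sum>\<phi>\<in>PiE I (\<lambda>_. {..<d}). weight E w (A \<union> \<Union>(B ` {i\<in>I. \<phi> i < j})))
       = (\<Sum>e\<in>{e\<in>E. e \<subseteq> A \<union> \<Union>(B ` I)}.
            w e * int j ^ card (blocks_meeting I B e) * int d ^ (card I - card (blocks_meeting I B e)))"
proof -
  let ?\<Phi> = "PiE I (\<lambda>_. {..<d})" and ?U = "A \<union> \<Union>(B ` I)" and ?T = "blocks_meeting I B"
  let ?X = "\<lambda>\<phi>. A \<union> \<Union>(B ` {i\<in>I. \<phi> i < j})"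
  have count: "card {\<phi> \<in> ?\<Phi>. e \<subseteq> ?X \<phi>}
      = (if e \<subseteq> ?U then j ^ card (?T e) * d ^ (card I - card (?T e)) else 0)" for e
  proof -
    have T: "?T e \<subseteq> I" by (auto simp: blocks_meeting_def)
    have "e \<subseteq> ?X \<phi> \<longleftrightarrow> e \<subseteq> ?U \<and> (\<forall>i\<in>?T e. \<phi> i < j)" for \<phi>
      using subset_union_blocks_iff[OF assms(3,4), of "{i\<in>I. \<phi> i < j}" e] T by blast
    then have "{\<phi> \<in> ?\<Phi>. e \<subseteq> ?X \<phi>} = (if e \<subseteq> ?U then {\<phi> \<in> ?\<Phi>. \<forall>i\<in>?T e. \<phi> i < j} else {})"
      by auto
    then show ?thesis using card_PiE_less_on[OF assms(2) T assms(5)] by simp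
  qed
  have "(\<Sum>\<phi>\<in>?\<Phi>. weight E w (?X \<phi>)) = (\<Sum>e\<in>E. \<Sum>\<phi>\<in>?\<Phi>. if e \<subseteq> ?X \<phi> then w e else 0)"
    unfolding weight_eq_sum_if[OF assms(1)] by (rule sum.swap)
  also have "\<dots> = (\<Sum>e\<in>E. w e * int (card {\<phi> \<in> ?\<Phi>. e \<subseteq> ?X \<phi>}))"
    by (intro sum.cong refl) (simp add: sum.inter_filter[symmetric] assms(2) finite_PiE mult.commute)
  also have "\<dots> = (\<Sum>e\<in>E. if e \<subseteq> ?U then w e * int j ^ card (?T e) * int d ^ (card I - card (?T e)) else 0)"
    by (intro sum.cong refl) (simp add: count mult.assoc)
  also have "\<dots> = (\<Sum>e\<in>{e\<in>E. e \<subseteq> ?U}. w e * int j ^ card (?T e) * int d ^ (card I - card (?T e)))"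
    using assms(1) by (simp add: sum.inter_filter)
  finally show ?thesis .
qed

lemma sum_weight_increments_eq:
  assumes "finite E" "finite I" "\<forall>i\<in>I. A \<inter> B i = {}" "disjoint_family_on B I"
  shows "(\<Sum>i\<in>I. weight E w (A \<union> B i) - weight E w A)
       = (\<Sum>e\<in>{e\<in>E. e \<subseteq> A \<union> \<Union>(B ` I) \<and> card (blocks_meeting I B e) = 1}. w e)"
proof -
  let ?U = "A \<union> \<Union>(B ` I)" and ?T = "blocks_meeting I B"
  have increment: "(e \<subseteq> A \<union> B i \<and> \<not> e \<subseteq> A) \<longleftrightarrow> (e \<subseteq> ?U \<and> ?T e = {i})" if "i \<in> I" for e i
    using subset_union_blocks_iff[OF assms(3,4), of "{i}" e]
      subset_union_blocks_iff[OF assms(3,4), of "{}" e] that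
    by auto
  have "(\<Sum>i\<in>I. weight E w (A \<union> B i) - weight E w A)
      = (\<Sum>i\<in>I. \<Sum>e\<in>E. if e \<subseteq> ?U \<and> ?T e = {i} then w e else 0)"
    unfolding weight_eq_sum_if[OF assms(1)]
    by (auto simp: sum_subtractf[symmetric] increment[symmetric] intro!: sum.cong)
  also have "\<dots> = (\<Sum>e\<in>E. \<Sum>i\<in>I. if e \<subseteq> ?U \<and> ?T e = {i} then w e else 0)"
    by (rule sum.swap)
  also have "\<dots> = (\<Sum>e\<in>E. if e \<subseteq> ?U \<and> card (?T e) = 1 then w e else 0)"
  proof (rule sum.cong[OF refl])
    fix e
    show "(\<Sum>i\<in>I. if e \<subseteq> ?U \<and> ?T e = {i} then w e else 0)
        = (if e \<subseteq> ?U \<and> card (?T e) = 1 then w e else 0)"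
    proof (cases "e \<subseteq> ?U \<and> card (?T e) = 1")
      case True
      then obtain i0 where i0: "?T e = {i0}" by (auto simp: card_1_singleton_iff)
      then have "i0 \<in> I" by (auto simp: blocks_meeting_def)
      with True i0 assms(2) show ?thesis by simp
    next
      case False
      then have not_single: "\<not> (e \<subseteq> ?U \<and> ?T e = {i})" for i
        by (metis card_1_singleton_iff One_nat_def)
      have "(\<Sum>i\<in>I. if e \<subseteq> ?U \<and> ?T e = {i} then w e else 0) = 0"
        by (intro sum.neutral ballI) (simp only: not_single if_False)
      with False show ?thesis by (simp only: if_False)
    qed
  qed
  also have "\<dots> = (\<Sum>e\<in>{e\<in>E. e \<subseteq> ?U \<and> card (?T e) = 1}. w e)"
    using assms(1) by (simp add: sum.inter_filter)
  finally show ?thesis .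
qed

lemma sum_linear_coeff_weight_assignments:
  assumes finE: "finite E" and edges: "\<forall>e\<in>E. finite e \<and> card e \<le> d" and d: "d \<ge> 1"
    and finI: "finite I" and AB: "\<forall>i\<in>I. A \<inter> B i = {}" and disj: "disjoint_family_on B I"
  shows "(\<Sum>j\<le>d. linear_coeff_weight d j
            * real_of_int (\<Sum>\<phi>\<in>PiE I (\<lambda>_. {..<d}). weight E w (A \<union> \<Union>(B ` {i\<in>I. \<phi> i < j}))))
       = real d ^ (card I - 1) * real_of_int (\<Sum>i\<in>I. weight E w (A \<union> B i) - weight E w A)"
    (is "?lhs = _")
proof -
  let ?T = "blocks_meeting I B" and ?c = "linear_coeff_weight d" and ?m = "card I"
  let ?E = "{e\<in>E. e \<subseteq> A \<union> \<Union>(B ` I)}"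
  have T_le: "card (?T e) \<le> d" if "e \<in> E" for e
    using card_blocks_meeting_le[OF _ finI disj, of e] edges that by fastforce
  have "?lhs = (\<Sum>j\<le>d. \<Sum>e\<in>?E. real_of_int (w e) * real d ^ (?m - card (?T e)) * (?c j * real j ^ card (?T e)))"
    by (intro sum.cong refl)
      (simp add: sum_weight_over_assignments[OF finE finI AB disj] sum_distrib_left mult_ac)
  also have "\<dots> = (\<Sum>e\<in>?E. real_of_int (w e) * real d ^ (?m - card (?T e))
                      * (\<Sum>j\<le>d. ?c j * real j ^ card (?T e)))"
    by (subst sum.swap) (simp add: sum_distrib_left)
  also have "\<dots> = (\<Sum>e\<in>?E. if card (?T e) = 1 then real_of_int (w e) * real d ^ (?m - 1) else 0)"
    using T_le by (intro sum.cong refl) (simp add: sum_linear_coeff_weight_power[OF d])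
  also have "\<dots> = (\<Sum>e\<in>{e\<in>?E. card (?T e) = 1}. real_of_int (w e) * real d ^ (?m - 1))"
    using finE by (intro sum.inter_filter[symmetric]) simp
  also have "{e\<in>?E. card (?T e) = 1} = {e\<in>E. e \<subseteq> A \<union> \<Union>(B ` I) \<and> card (?T e) = 1}"
    by blast
  also have "(\<Sum>e\<in>\<dots>. real_of_int (w e) * real d ^ (?m - 1))
      = real d ^ (?m - 1) * real_of_int (\<Sum>i\<in>I. weight E w (A \<union> B i) - weight E w A)"
    unfolding sum_weight_increments_eq[OF finE finI AB disj]
    by (simp add: sum_distrib_left mult.commute)
  finally show ?thesis .
qed

lemma abs_sum_weight_increments_le:
  fixes \<beta> :: int
  assumes finE: "finite E" and edges: "\<forall>e\<in>E. finite e \<and> card e \<le> d" and d: "d \<ge> 1"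
    and finI: "finite I" and AB: "\<forall>i\<in>I. A \<inter> B i = {}" and disj: "disjoint_family_on B I"
    and bnd: "\<forall>J\<subseteq>I. \<bar>weight E w (A \<union> \<Union>(B ` J))\<bar> \<le> \<beta>"
  shows "\<bar>real_of_int (\<Sum>i\<in>I. weight E w (A \<union> B i) - weight E w A)\<bar>
           \<le> real d * (\<Sum>j\<le>d. \<bar>linear_coeff_weight d j\<bar>) * real_of_int \<beta>"
proof -
  let ?c = "linear_coeff_weight d" and ?m = "card I"
  define R where "R = (\<Sum>i\<in>I. weight E w (A \<union> B i) - weight E w A)"
  define Z where "Z j = real_of_int (\<Sum>\<phi>\<in>PiE I (\<lambda>_. {..<d}). weight E w (A \<union> \<Union>(B ` {i\<in>I. \<phi> i < j})))"
    for j
  have "\<bar>Z j\<bar> \<le> real d ^ ?m * real_of_int \<beta>" for j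
  proof -
    have "\<bar>weight E w (A \<union> \<Union>(B ` {i\<in>I. \<phi> i < j}))\<bar> \<le> \<beta>" for \<phi>
      by (intro bnd[rule_format]) auto
    then have "\<bar>Z j\<bar> \<le> (\<Sum>\<phi>\<in>PiE I (\<lambda>_. {..<d}). real_of_int \<beta>)"
      unfolding Z_def of_int_sum
      by (intro order_trans[OF sum_abs] sum_mono) (simp only: of_int_abs[symmetric] of_int_le_iff)
    also have "\<dots> = real d ^ ?m * real_of_int \<beta>"
      using finI by (simp add: card_PiE)
    finally show ?thesis .
  qed
  then have "\<bar>\<Sum>j\<le>d. ?c j * Z j\<bar> \<le> (\<Sum>j\<le>d. \<bar>?c j\<bar> * (real d ^ ?m * real_of_int \<beta>))"
    by (intro order_trans[OF sum_abs] sum_mono) (simp add: abs_mult mult_left_mono)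
  then have main: "real d ^ (?m - 1) * \<bar>real_of_int R\<bar> \<le> (\<Sum>j\<le>d. \<bar>?c j\<bar>) * (real d ^ ?m * real_of_int \<beta>)"
    using sum_linear_coeff_weight_assignments[OF finE edges d finI AB disj]
    unfolding Z_def R_def by (simp add: abs_mult sum_distrib_right)
  show ?thesis
  proof (cases "I = {}")
    case True
    moreover have "\<beta> \<ge> 0" using bnd[rule_format, of "{}"] by simp
    ultimately show ?thesis by (simp add: sum_nonneg)
  next
    case False
    then have "real d ^ ?m = real d ^ (?m - 1) * real d" using finI by (simp add: power_eq_if)
    with main have "real d ^ (?m - 1) * \<bar>real_of_int R\<bar>
        \<le> real d ^ (?m - 1) * (real d * (\<Sum>j\<le>d. \<bar>?c j\<bar>) * real_of_int \<beta>)"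
      by (simp add: algebra_simps)
    then show ?thesis using d unfolding R_def by (simp add: mult_le_cancel_left_pos)
  qed
qed

section \<open>Disjoint petals in the link\<close>

lemma gfun_ge_1: "\<alpha> \<ge> 1 \<Longrightarrow> gfun d \<alpha> i \<ge> 1"
  unfolding gfun_def by (simp add: Suc_le_eq)

lemma gfun_step_le:
  assumes "\<alpha> \<ge> 1" "k \<ge> 1"
  shows "k * gfun d \<alpha> (k - 1) * (2 * \<alpha> * 2 ^ 2 ^ d) \<le> gfun d \<alpha> k"
proof -
  define B where "B = 2 * \<alpha> * 2 ^ 2 ^ d"
  define b where "b = k ^ k * B"
  have "B \<ge> 1" using assms unfolding B_def by simp
  have "k \<le> k ^ k" using assms power_increasing[of 1 k k] by simp
  have "b \<ge> 1" unfolding b_def using \<open>B \<ge> 1\<close> assms by simp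
  have prev: "gfun d \<alpha> (k - 1) \<le> b ^ (2 ^ (k - 1) - 1)"
  proof (cases "k = 1")
    case True
    then show ?thesis by (simp add: gfun_def)
  next
    case False
    have "(k - 1) ^ (k - 1) \<le> k ^ (k - 1)" by (simp add: power_mono)
    also have "\<dots> \<le> k ^ k" using assms by (simp add: power_increasing)
    finally have "(k - 1) ^ (k - 1) \<le> k ^ k" .
    then have "((k - 1) ^ (k - 1) * B) ^ (2 ^ (k - 1) - 1) \<le> b ^ (2 ^ (k - 1) - 1)"
      unfolding b_def by (intro power_mono mult_right_mono) auto
    with False assms show ?thesis unfolding gfun_def B_def by (simp add: mult.assoc)
  qed
  have exp: "(2::nat) ^ k - 1 = 2 ^ (k - 1) + (2 ^ (k - 1) - 1)"
    using assms by (cases k) simp_all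
  have "k * gfun d \<alpha> (k - 1) * B \<le> b * b ^ (2 ^ (k - 1) - 1)"
    using prev \<open>k \<le> k ^ k\<close> unfolding b_def
    by (metis mult.commute mult.left_commute mult_le_mono mult_le_mono1)
  also have "\<dots> \<le> b ^ 2 ^ (k - 1) * b ^ (2 ^ (k - 1) - 1)"
    using \<open>b \<ge> 1\<close> by (intro mult_right_mono) (auto simp: self_le_power)
  also have "\<dots> = gfun d \<alpha> k"
    using assms unfolding exp power_add[symmetric] gfun_def b_def B_def by (simp add: mult.assoc)
  finally show ?thesis unfolding B_def .
qed

lemma card_meeting_le:
  assumes "finite P" "\<forall>v. card {e\<in>L. v \<in> p e} \<le> D"
  shows "card {e\<in>L. p e \<inter> P \<noteq> {}} \<le> card P * D"
proof -
  have "{e\<in>L. p e \<inter> P \<noteq> {}} = (\<Union>v\<in>P. {e\<in>L. v \<in> p e})" by auto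
  then have "card {e\<in>L. p e \<inter> P \<noteq> {}} \<le> (\<Sum>v\<in>P. card {e\<in>L. v \<in> p e})"
    using assms(1) by (simp add: card_UN_le)
  also have "\<dots> \<le> card P * D" using assms(2) sum_mono[of P _ "\<lambda>_. D"] by simp
  finally show ?thesis .
qed

lemma exists_disjoint_subfamily:
  assumes "finite L" "\<forall>e\<in>L. finite (p e) \<and> p e \<noteq> {} \<and> card (p e) \<le> k"
    and "\<forall>v. card {e\<in>L. v \<in> p e} \<le> D"
  shows "\<exists>S\<subseteq>L. disjoint_family_on p S \<and> card L \<le> card S * (k * D)"
  using assms
proof (induction L rule: finite_psubset_induct)
  case (psubset L)
  show ?case
  proof (cases "L = {}")
    case True
    then show ?thesis by (auto simp: disjoint_family_on_def)
  next
    case False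
    then obtain e where "e \<in> L" by auto
    \<comment> \<open>greedily keep e and discard every member whose petal meets that of e\<close>
    define K where "K = {e'\<in>L. p e' \<inter> p e \<noteq> {}}"
    have "card K \<le> card (p e) * D"
      unfolding K_def using psubset.prems \<open>e \<in> L\<close> by (intro card_meeting_le) auto
    also have "\<dots> \<le> k * D" using psubset.prems(1) \<open>e \<in> L\<close> by simp
    finally have card_K: "card K \<le> k * D" .
    have "e \<in> K" "K \<subseteq> L" using psubset.prems(1) \<open>e \<in> L\<close> unfolding K_def by auto
    have "\<forall>v. card {e'\<in>L - K. v \<in> p e'} \<le> D"
    proof
      fix v
      have "card {e'\<in>L - K. v \<in> p e'} \<le> card {e'\<in>L. v \<in> p e'}"
        using psubset.hyps(1) by (intro card_mono) auto
      then show "card {e'\<in>L - K. v \<in> p e'} \<le> D" using psubset.prems(2) le_trans by blast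
    qed
    then obtain S where S: "S \<subseteq> L - K" "disjoint_family_on p S" "card (L - K) \<le> card S * (k * D)"
      using psubset.IH[of "L - K"] psubset.prems \<open>e \<in> K\<close> \<open>e \<in> L\<close> by blast
    have "finite S" "e \<notin> S" using S(1) psubset.hyps(1) \<open>e \<in> K\<close> finite_subset by auto
    have "card L = card (L - K) + card K"
      using psubset.hyps(1) \<open>K \<subseteq> L\<close> by (metis card_Diff_subset card_mono finite_subset le_add_diff_inverse2)
    show ?thesis
    proof (intro exI[of _ "insert e S"] conjI)
      show "insert e S \<subseteq> L" using S(1) \<open>e \<in> L\<close> by auto
      show "disjoint_family_on p (insert e S)"
        using S unfolding K_def disjoint_family_on_def by blast
      show "card L \<le> card (insert e S) * (k * D)"
        using \<open>card L = _\<close> card_K S(3) \<open>finite S\<close> \<open>e \<notin> S\<close> by simp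
    qed
  qed
qed

lemma card_link_petals_containing_le:
  assumes finE: "finite E" and EV: "\<forall>e\<in>E. e \<subseteq> V" and "finite c" "c \<subseteq> V" "card c < d"
    and small: "\<forall>f. c \<subset> f \<and> f \<subseteq> V \<and> card f \<le> d \<longrightarrow> card (link E f) < gfun d \<alpha> (d - card f)"
  shows "card {e \<in> link E c. v \<in> e - c} \<le> gfun d \<alpha> (d - card c - 1)"
proof (cases "v \<in> V - c")
  case False
  then have "{e \<in> link E c. v \<in> e - c} = {}" using EV by (auto simp: link_def)
  then show ?thesis by (metis card.empty zero_le)
next
  case True
  define f where "f = insert v c"
  have card_f: "card f = card c + 1" unfolding f_def using True \<open>finite c\<close> by simp
  then have "c \<subset> f \<and> f \<subseteq> V \<and> card f \<le> d" using True assms(4,5) unfolding f_def by auto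
  then have small_f: "card (link E f) < gfun d \<alpha> (d - card c - 1)" using small[rule_format, of f] card_f by simp
  have "{e \<in> link E c. v \<in> e - c} \<subseteq> insert f (link E f)"
    unfolding link_def f_def by auto
  moreover have "finite (link E f)" using finE by (simp add: link_def)
  ultimately have "card {e \<in> link E c. v \<in> e - c} \<le> card (insert f (link E f))"
    by (intro card_mono) simp_all
  also have "\<dots> \<le> card (link E f) + 1" using \<open>finite (link E f)\<close> by (simp add: card_insert_if)
  finally show ?thesis using small_f by simp
qed

lemma weight_jump_in_edge:
  assumes finE: "finite E" and fin: "\<forall>e\<in>E. finite e" and nz: "\<forall>e\<in>E. w e \<noteq> 0"
    and "e \<in> E" "\<not> e \<subseteq> c"
  shows "\<exists>A B. A \<subseteq> c \<and> B \<subseteq> e - c \<and> weight E w (A \<union> B) \<noteq> weight E w A"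
proof -
  define M where "M = {e'\<in>E. e' \<subseteq> e \<and> \<not> e' \<subseteq> c}"
  have "e \<in> M" using assms(4,5) unfolding M_def by auto
  then obtain e0 where e0: "e0 \<in> M" "\<And>e'. e' \<in> M \<Longrightarrow> card e0 \<le> card e'"
    using ex_has_least_nat[of "\<lambda>x. x \<in> M" e card] by blast
  have only_e0: "e' \<subseteq> e0 \<and> \<not> e' \<subseteq> c \<longleftrightarrow> e' = e0" if "e' \<in> E" for e'
  proof
    assume e': "e' \<subseteq> e0 \<and> \<not> e' \<subseteq> c"
    then have "e' \<in> M" using that e0(1) unfolding M_def by auto
    then have "card e0 \<le> card e'" by (rule e0(2))
    moreover have "finite e0" using e0(1) fin unfolding M_def by blast
    ultimately show "e' = e0" using card_seteq e' by blast
  qed (use e0 M_def in auto)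
  have "weight E w e0 - weight E w (e0 \<inter> c) = (\<Sum>e'\<in>E. if e' \<subseteq> e0 \<and> \<not> e' \<subseteq> c then w e' else 0)"
    unfolding weight_eq_sum_if[OF finE] by (simp add: sum_subtractf[symmetric]) (rule sum.cong, auto)
  also have "\<dots> = w e0"
    using e0(1) finE only_e0 unfolding M_def by (simp cong: if_cong)
  finally have "weight E w e0 \<noteq> weight E w (e0 \<inter> c)"
    using nz e0(1) unfolding M_def by auto
  moreover have "e0 = (e0 \<inter> c) \<union> (e0 - c)" by auto
  ultimately show ?thesis using e0(1) unfolding M_def
    by (intro exI[of _ "e0 \<inter> c"] exI[of _ "e0 - c"]) auto
qed

lemma card_le_abs_sum_same_sign:
  fixes a :: "'i \<Rightarrow> int"
  assumes "\<forall>i\<in>I. a i \<noteq> 0" "\<forall>i\<in>I. \<forall>j\<in>I. (a i > 0) = (a j > 0)"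
  shows "int (card I) \<le> \<bar>sum a I\<bar>"
proof (cases "\<exists>i\<in>I. a i > 0")
  case True
  then have "\<forall>i\<in>I. a i \<ge> 1" using assms(2) by fastforce
  then have "(\<Sum>i\<in>I. 1) \<le> sum a I" by (intro sum_mono) auto
  then show ?thesis by simp
next
  case False
  then have "\<forall>i\<in>I. a i \<le> -1" using assms(1) by fastforce
  then have "sum a I \<le> (\<Sum>i\<in>I. -1)" by (intro sum_mono) auto
  then show ?thesis by simp
qed

lemma card_disjoint_increments_le:
  fixes \<beta> :: int
  assumes finE: "finite E" and edges: "\<forall>e\<in>E. finite e \<and> card e \<le> d" and d: "d \<ge> 1"
    and finI: "finite I" and AB: "\<forall>i\<in>I. A \<inter> B i = {}" and disj: "disjoint_family_on B I"
    and bnd: "\<forall>J\<subseteq>I. \<bar>weight E w (A \<union> \<Union>(B ` J))\<bar> \<le> \<beta>"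
    and nz: "\<forall>i\<in>I. weight E w (A \<union> B i) \<noteq> weight E w A"
    and sign: "\<forall>i\<in>I. \<forall>j\<in>I. (weight E w (A \<union> B i) > weight E w A) = (weight E w (A \<union> B j) > weight E w A)"
  shows "int (card I) * 2 ^ d \<le> 2 * 2 ^ 2 ^ d * \<beta>"
proof -
  let ?R = "\<Sum>i\<in>I. weight E w (A \<union> B i) - weight E w A"
  let ?K = "real d * (\<Sum>j\<le>d. \<bar>linear_coeff_weight d j\<bar>)"
  have "\<beta> \<ge> 0" using bnd[rule_format, of "{}"] by simp
  have "int (card I) \<le> \<bar>?R\<bar>"
  proof (rule card_le_abs_sum_same_sign)
    show "\<forall>i\<in>I. weight E w (A \<union> B i) - weight E w A \<noteq> 0" using nz by simp
    show "\<forall>i\<in>I. \<forall>j\<in>I. (weight E w (A \<union> B i) - weight E w A > 0) = (weight E w (A \<union> B j) - weight E w A > 0)"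
      unfolding diff_gt_0_iff_gt by (rule sign)
  qed
  then have "real (card I) \<le> \<bar>real_of_int ?R\<bar>"
    by (metis of_int_abs of_int_le_iff of_int_of_nat_eq)
  also have "\<dots> \<le> ?K * real_of_int \<beta>"
    by (rule abs_sum_weight_increments_le[OF finE edges d finI AB disj bnd])
  finally have "real (card I) * 2 ^ d \<le> (?K * 2 ^ d) * real_of_int \<beta>"
    by (simp add: mult_right_mono mult_ac)
  also have "\<dots> \<le> 2 * 2 ^ 2 ^ d * real_of_int \<beta>"
    using linear_coeff_weight_bound[OF d] \<open>\<beta> \<ge> 0\<close> by (intro mult_right_mono) simp_all
  finally have "real_of_int (int (card I) * 2 ^ d) \<le> real_of_int (2 * 2 ^ 2 ^ d * \<beta>)" by simp
  then show ?thesis by (simp only: of_int_le_iff)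
qed

lemma exists_uniform_jump_class:
  assumes finE: "finite E" and fin_edges: "\<forall>e\<in>E. finite e" and nz: "\<forall>e\<in>E. w e \<noteq> 0"
    and "finite c" and S: "S \<subseteq> E" "\<forall>e\<in>S. \<not> e \<subseteq> c"
  shows "\<exists>I\<subseteq>S. \<exists>A0 B. A0 \<subseteq> c \<and> card S \<le> card I * 2 ^ (card c + 1)
           \<and> (\<forall>i\<in>I. B i \<subseteq> i - c \<and> weight E w (A0 \<union> B i) \<noteq> weight E w A0)
           \<and> (\<forall>i\<in>I. \<forall>j\<in>I. (weight E w (A0 \<union> B i) > weight E w A0)
                           = (weight E w (A0 \<union> B j) > weight E w A0))"
proof -
  have "\<forall>e\<in>S. \<exists>A B. A \<subseteq> c \<and> B \<subseteq> e - c \<and> weight E w (A \<union> B) \<noteq> weight E w A"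
    using S by (intro ballI weight_jump_in_edge[OF finE fin_edges nz]) auto
  then obtain A where "\<forall>e\<in>S. \<exists>B. A e \<subseteq> c \<and> B \<subseteq> e - c \<and> weight E w (A e \<union> B) \<noteq> weight E w (A e)"
    by (metis bchoice)
  then obtain B where AB: "\<forall>e\<in>S. A e \<subseteq> c \<and> B e \<subseteq> e - c \<and> weight E w (A e \<union> B e) \<noteq> weight E w (A e)"
    by metis
  define jump_type where "jump_type e = (A e, weight E w (A e \<union> B e) > weight E w (A e))" for e
  define Y where "Y = Pow c \<times> (UNIV :: bool set)"
  have "finite S" using S(1) finE finite_subset by blast
  moreover have "finite Y" "Y \<noteq> {}" "jump_type \<in> S \<rightarrow> Y"
    using AB \<open>finite c\<close> unfolding Y_def jump_type_def by auto
  ultimately obtain y where "y \<in> Y" and y: "card S \<le> card (jump_type -` {y} \<inter> S) * card Y"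
    using pigeonhole_card by blast
  obtain A0 s0 where "y = (A0, s0)" by fastforce
  define I where "I = jump_type -` {y} \<inter> S"
  have A_I: "A i = A0" and sign_I: "(weight E w (A i \<union> B i) > weight E w (A i)) = s0" if "i \<in> I" for i
    using that unfolding I_def jump_type_def \<open>y = (A0, s0)\<close> by auto
  have "card Y = 2 ^ (card c + 1)"
    using \<open>finite c\<close> unfolding Y_def by (simp add: card_cartesian_product card_Pow)
  show ?thesis
  proof (intro exI[of _ I] exI[of _ A0] exI[of _ B] conjI)
    show "I \<subseteq> S" unfolding I_def by blast
    show "A0 \<subseteq> c" using \<open>y \<in> Y\<close> unfolding \<open>y = (A0, s0)\<close> Y_def by auto
    show "card S \<le> card I * 2 ^ (card c + 1)" using y \<open>card Y = _\<close> unfolding I_def by simp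
    show "\<forall>i\<in>I. B i \<subseteq> i - c \<and> weight E w (A0 \<union> B i) \<noteq> weight E w A0"
      using AB A_I unfolding I_def by force
    show "\<forall>i\<in>I. \<forall>j\<in>I. (weight E w (A0 \<union> B i) > weight E w A0) = (weight E w (A0 \<union> B j) > weight E w A0)"
      using A_I sign_I by simp
  qed
qed

lemma card_disjoint_petals_le:
  fixes \<beta> :: int
  assumes finE: "finite E" and edges: "\<forall>e\<in>E. finite e \<and> card e \<le> d" and d: "d \<ge> 1"
    and nz: "\<forall>e\<in>E. w e \<noteq> 0" and "finite c"
    and S: "S \<subseteq> E" "\<forall>e\<in>S. c \<subset> e" and petals: "disjoint_family_on (\<lambda>e. e - c) S"
    and bnd: "\<forall>X\<subseteq>\<Union>S. \<bar>weight E w X\<bar> \<le> \<beta>"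
  shows "int (card S) \<le> 2 * 2 ^ 2 ^ d * \<beta>"
proof (cases "S = {}")
  case True
  then show ?thesis using bnd by auto
next
  case False
  then obtain e where "e \<in> S" by auto
  then have "c \<subset> e" "finite e" "card e \<le> d" using S edges by auto
  then have "card c + 1 \<le> d" using psubset_card_mono[of e c] by simp
  have "\<forall>e\<in>E. finite e" "\<forall>e\<in>S. \<not> e \<subseteq> c" using edges S(2) by auto
  then obtain I A0 B where "I \<subseteq> S" "A0 \<subseteq> c" and card_S: "card S \<le> card I * 2 ^ (card c + 1)"
    and jumps: "\<forall>i\<in>I. B i \<subseteq> i - c \<and> weight E w (A0 \<union> B i) \<noteq> weight E w A0"
    and sign: "\<forall>i\<in>I. \<forall>j\<in>I. (weight E w (A0 \<union> B i) > weight E w A0) = (weight E w (A0 \<union> B j) > weight E w A0)"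
    using exists_uniform_jump_class[OF finE _ nz \<open>finite c\<close> S(1)] by blast
  have B_sub: "B i \<subseteq> i - c" if "i \<in> I" for i using jumps[rule_format, OF that] by (rule conjunct1)
  have "int (card I) * 2 ^ d \<le> 2 * 2 ^ 2 ^ d * \<beta>"
  proof (rule card_disjoint_increments_le[OF finE edges d _ _ _ _ _ sign])
    show "finite I" by (rule finite_subset[OF subset_trans[OF \<open>I \<subseteq> S\<close> S(1)] finE])
    show "\<forall>i\<in>I. A0 \<inter> B i = {}"
    proof
      fix i assume "i \<in> I"
      then show "A0 \<inter> B i = {}" using B_sub[of i] \<open>A0 \<subseteq> c\<close> by blast
    qed
    show "disjoint_family_on B I"
      using disjoint_family_on_mono[OF \<open>I \<subseteq> S\<close> petals]
      by (rule disjoint_family_on_bisimulation) (use B_sub in blast)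
    have "c \<subseteq> \<Union>S" using \<open>e \<in> S\<close> \<open>c \<subset> e\<close> by blast
    have "A0 \<union> \<Union>(B ` J) \<subseteq> \<Union>S" if "J \<subseteq> I" for J
      using that B_sub \<open>A0 \<subseteq> c\<close> \<open>c \<subseteq> \<Union>S\<close> \<open>I \<subseteq> S\<close> by blast
    then show "\<forall>J\<subseteq>I. \<bar>weight E w (A0 \<union> \<Union>(B ` J))\<bar> \<le> \<beta>"
      using bnd by simp
    show "\<forall>i\<in>I. weight E w (A0 \<union> B i) \<noteq> weight E w A0" using jumps by blast
  qed
  moreover have "card S \<le> card I * 2 ^ d"
  proof -
    have "(2::nat) ^ (card c + 1) \<le> 2 ^ d"
      using \<open>card c + 1 \<le> d\<close> by (intro power_increasing) simp_all
    then have "card I * 2 ^ (card c + 1) \<le> card I * 2 ^ d" by simp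
    with card_S show ?thesis by linarith
  qed
  then have "int (card S) \<le> int (card I * 2 ^ d)" by (simp only: of_nat_le_iff)
  moreover have "int (card I * 2 ^ d) = int (card I) * 2 ^ d" by simp
  ultimately show ?thesis by linarith
qed

lemma hypergraph_finite_edges:
  assumes "hypergraph d V E"
  shows "finite E" and "\<forall>e\<in>E. finite e \<and> card e \<le> d"
proof -
  have "finite V" "\<forall>e\<in>E. e \<subseteq> V \<and> card e \<le> d" using assms by (auto simp: hypergraph_def)
  then show "finite E" "\<forall>e\<in>E. finite e \<and> card e \<le> d"
    by (auto intro: finite_subset[of E "Pow V"] finite_subset)
qed

lemma exists_large_disjoint_petals:
  assumes H: "hypergraph d V E" and "c \<subseteq> V" "\<alpha> \<ge> 1"
    and big: "card (link E c) \<ge> gfun d \<alpha> (d - card c)"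
    and small: "\<forall>f. c \<subset> f \<and> f \<subseteq> V \<and> card f \<le> d \<longrightarrow> card (link E f) < gfun d \<alpha> (d - card f)"
  shows "\<exists>S\<subseteq>link E c. disjoint_family_on (\<lambda>e. e - c) S \<and> 2 * \<alpha> * 2 ^ 2 ^ d \<le> card S"
proof -
  have "finite E" and edges: "\<forall>e\<in>E. finite e \<and> card e \<le> d" using hypergraph_finite_edges[OF H] .
  have EV: "\<forall>e\<in>E. e \<subseteq> V" and "finite c"
    using H \<open>c \<subseteq> V\<close> finite_subset by (auto simp: hypergraph_def)
  define k where "k = d - card c"
  define D where "D = gfun d \<alpha> (k - 1)"
  have petal_card: "card (e - c) \<le> k \<and> card c < card e" if "e \<in> link E c" for e
    using that edges \<open>finite c\<close> unfolding link_def k_def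
    by (auto simp: card_Diff_subset psubset_card_mono)
  have "link E c \<noteq> {}" using big gfun_ge_1[OF \<open>\<alpha> \<ge> 1\<close>, of d "d - card c"] by auto
  then have "card c < d" using petal_card edges unfolding link_def by fastforce
  then have "k \<ge> 1" unfolding k_def by simp
  have "finite (link E c)" using \<open>finite E\<close> by (simp add: link_def)
  moreover have "\<forall>e\<in>link E c. finite (e - c) \<and> e - c \<noteq> {} \<and> card (e - c) \<le> k"
    using petal_card edges unfolding link_def by auto
  moreover have "\<forall>v. card {e \<in> link E c. v \<in> e - c} \<le> D"
    using card_link_petals_containing_le[OF \<open>finite E\<close> EV \<open>finite c\<close> \<open>c \<subseteq> V\<close> \<open>card c < d\<close> small]
    unfolding D_def k_def by (simp add: diff_diff_add)
  ultimately obtain S where S: "S \<subseteq> link E c" "disjoint_family_on (\<lambda>e. e - c) S"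
      "card (link E c) \<le> card S * (k * D)"
    using exists_disjoint_subfamily[of "link E c" "\<lambda>e. e - c" k D] by blast
  have "k * D * (2 * \<alpha> * 2 ^ 2 ^ d) \<le> card S * (k * D)"
    using gfun_step_le[OF \<open>\<alpha> \<ge> 1\<close> \<open>k \<ge> 1\<close>, of d] big S(3) unfolding D_def k_def by linarith
  moreover have "k * D > 0" using \<open>k \<ge> 1\<close> gfun_ge_1[OF \<open>\<alpha> \<ge> 1\<close>] unfolding D_def
    by (simp add: Suc_le_eq)
  ultimately have "2 * \<alpha> * 2 ^ 2 ^ d \<le> card S" by (simp add: mult.commute)
  with S show ?thesis by blast
qed

theorem lemma10:
  fixes d \<alpha> :: nat and V :: "'a set" and E :: "'a set set"
    and w :: "'a set \<Rightarrow> int" and c :: "'a set"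
  assumes "d \<ge> 1"
    and "hypergraph d V E"
    and "no_isolated V E"
    and "\<forall>e\<in>E. w e \<noteq> 0"
    and "\<exists>e\<in>E. c \<subseteq> e"
    and "card (link E c) \<ge> gfun d \<alpha> (d - card c)"
    and "\<forall>f. c \<subset> f \<and> f \<subseteq> V \<and> card f \<le> d \<longrightarrow> card (link E f) < gfun d \<alpha> (d - card f)"
  shows "\<exists>X\<subseteq>V. \<bar>weight E w X\<bar> \<ge> int \<alpha>"
proof (rule ccontr)
  assume "\<not> ?thesis"
  then have bnd: "\<forall>X\<subseteq>V. \<bar>weight E w X\<bar> \<le> int \<alpha> - 1" by auto
  have "\<bar>weight E w {}\<bar> \<le> int \<alpha> - 1" using bnd by blast
  then have "\<alpha> \<ge> 1" using abs_ge_zero[of "weight E w {}"] by linarith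
  have "\<forall>e\<in>E. e \<subseteq> V" using assms(2) by (simp add: hypergraph_def)
  then have "c \<subseteq> V" using assms(5) by blast
  then obtain S where S: "S \<subseteq> link E c" "disjoint_family_on (\<lambda>e. e - c) S" "2 * \<alpha> * 2 ^ 2 ^ d \<le> card S"
    using exists_large_disjoint_petals[OF assms(2) _ \<open>\<alpha> \<ge> 1\<close> assms(6,7)] by blast
  have "S \<subseteq> E" "\<forall>e\<in>S. c \<subset> e" using S(1) by (auto simp: link_def)
  moreover have "finite c" using assms(5) hypergraph_finite_edges(2)[OF assms(2)] finite_subset by blast
  moreover have "\<forall>X\<subseteq>\<Union>S. \<bar>weight E w X\<bar> \<le> int \<alpha> - 1"
    using bnd \<open>\<forall>e\<in>E. e \<subseteq> V\<close> \<open>S \<subseteq> E\<close> by (meson Sup_le_iff subset_iff subset_trans)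
  ultimately have "int (card S) \<le> 2 * 2 ^ 2 ^ d * (int \<alpha> - 1)"
    using card_disjoint_petals_le[OF hypergraph_finite_edges[OF assms(2)] assms(1,4) _ _ _ S(2)] by blast
  moreover have "int (2 * \<alpha> * 2 ^ 2 ^ d) \<le> int (card S)"
    using S(3) by (simp only: of_nat_le_iff)
  moreover have "2 * 2 ^ 2 ^ d * (int \<alpha> - 1) = int (2 * \<alpha> * 2 ^ 2 ^ d) - 2 * 2 ^ 2 ^ d"
    by (simp add: algebra_simps)
  moreover have "(0::int) < 2 ^ 2 ^ d" by simp
  ultimately show False by linarith
qed

end
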